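(* Let $\vdash\subseteq Sqt$ and $\Gamma\subseteq Form$. (1) If $\Gamma$ is maximal $\vdash$-consistent, then $\Gamma$ is $\vdash$-prime. (2) If $\vdash$ satisfies (A) and (Cut), and $\Gamma$ is maximal $R_\to$-consistent and closed under $\wedge$ (i.e. $\alpha,\beta\in\Gamma\Rightarrow\alpha\wedge\beta\in\Gamma$), then $\Gamma$ is $\vdash$-prime.
   Context: $Form$: $\varphi::=p\mid\bot\mid(\varphi\wedge\varphi)\mid(\varphi\to\varphi)$ over a countable set $P0$ ($\wedge$ left-associative, binds tighter than $\to$). Sequents are pairs $(\Gamma,\varphi)$ with $\Gamma\subseteq Form$; $Sqt$ their set; $\Gamma\vdash\varphi$ means $(\Gamma,\varphi)\in\vdash$. (A): $\Gamma\cup\{\varphi\}\vdash\varphi$; (Cut): $\Gamma\cup\{\psi\}\vdash\varphi$ and $\Delta\vdash\psi$ imply $\Gamma\cup\Delta\vdash\varphi$. $\Gamma$ is $\vdash$-deduction closed iff $\Gamma\vdash\psi\Rightarrow\psi\in\Gamma$. $\Gamma$ is maximal $\varphi$-$\vdash$-consistent iff $\Gamma\nvdash\varphi$ and $\Gamma\cup\{\psi\}\vdash\varphi$ for all $\psi\notin\Gamma$; maximal $\vdash$-consistent iff maximal $\varphi$-$\vdash$-consistent for some $\varphi$. $\Phi R_\to\Delta$ iff for all $\varphi,\psi$, $\varphi\to\psi\in\Phi$ and $\varphi\in\Delta$ imply $\psi\in\Delta$. $\Phi(\Delta,\chi)=\{\psi:\exists\alpha\in\Delta,\ \Phi\vdash\alpha\wedge\chi\to\psi\}$.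 For a deduction closed $\Phi$, $\Delta$ is maximal $\Phi R_\to$-$\varphi$-consistent iff $\Delta\nvdash\varphi$, $\Phi R_\to\Delta$, and $\varphi\in\Phi(\Delta,\psi)$ for all $\psi\notin\Delta$; $\Delta$ is maximal $R_\to$-consistent iff it is maximal $\Phi R_\to$-$\varphi$-consistent for some $\varphi$ and some deduction closed $\Phi$. For $n\ge2$ and $\alpha,\beta_1,\dots,\beta_n\in Form$, $\vdash$ satisfies $(\alpha,\{\beta_1,\dots,\beta_n\})$ iff (i) for all $\Gamma\subseteq Form$, $\varphi\in Form$: if $\Gamma\cup\{\beta_i\}\vdash\varphi$ for all $i$, then $\Gamma\cup\{\alpha\}\vdash\varphi$; and (ii) for all $\varphi,\psi_1,\dots,\psi_n$: $\{\psi_i\wedge\beta_i\to\varphi: 1\le i\le n\}\vdash\psi_1\wedge\dots\wedge\psi_n\wedge\alpha\to\varphi$. $\Gamma$ is $\vdash$-prime iff for all $n\ge2$ and $\alpha,\beta_1,\dots,\beta_n$ such that $\vdash$ satisfies $(\alpha,\{\beta_1,\dots,\beta_n\})$ and $\alpha\in\Gamma$, some $\beta_i\in\Gamma$. *)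

theory Defs
  imports Main "HOL-Library.Countable"
begin

datatype 'p form = Atom 'p | Bot | Conj "'p form" "'p form" | Imp "'p form" "'p form"

type_synonym 'p sqt = "'p form set \<times> 'p form"

definition sat_A :: "'p sqt set \<Rightarrow> bool" where
  "sat_A D \<longleftrightarrow> (\<forall>\<Gamma> \<phi>. (insert \<phi> \<Gamma>, \<phi>) \<in> D)"

definition sat_Cut :: "'p sqt set \<Rightarrow> bool" where
  "sat_Cut D \<longleftrightarrow> (\<forall>\<Gamma> \<Delta> \<phi> \<psi>. (insert \<psi> \<Gamma>, \<phi>) \<in> D \<longrightarrow> (\<Delta>, \<psi>) \<in> D \<longrightarrow> (\<Gamma> \<union> \<Delta>, \<phi>) \<in> D)"

definition ded_closed :: "'p sqt set \<Rightarrow> 'p form set \<Rightarrow> bool" where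
  "ded_closed D \<Gamma> \<longleftrightarrow> (\<forall>\<psi>. (\<Gamma>, \<psi>) \<in> D \<longrightarrow> \<psi> \<in> \<Gamma>)"

definition max_cons_for :: "'p sqt set \<Rightarrow> 'p form set \<Rightarrow> 'p form \<Rightarrow> bool" where
  "max_cons_for D \<Gamma> \<phi> \<longleftrightarrow> (\<Gamma>, \<phi>) \<notin> D \<and> (\<forall>\<psi>. \<psi> \<notin> \<Gamma> \<longrightarrow> (insert \<psi> \<Gamma>, \<phi>) \<in> D)"

definition max_cons :: "'p sqt set \<Rightarrow> 'p form set \<Rightarrow> bool" where
  "max_cons D \<Gamma> \<longleftrightarrow> (\<exists>\<phi>. max_cons_for D \<Gamma> \<phi>)"

definition R_imp :: "'p form set \<Rightarrow> 'p form set \<Rightarrow> bool" where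
  "R_imp \<Phi> \<Delta> \<longleftrightarrow> (\<forall>\<phi> \<psi>. Imp \<phi> \<psi> \<in> \<Phi> \<longrightarrow> \<phi> \<in> \<Delta> \<longrightarrow> \<psi> \<in> \<Delta>)"

definition Phi_set :: "'p sqt set \<Rightarrow> 'p form set \<Rightarrow> 'p form set \<Rightarrow> 'p form \<Rightarrow> 'p form set" where
  "Phi_set D \<Phi> \<Delta> \<chi> = {\<psi>. \<exists>\<alpha>\<in>\<Delta>. (\<Phi>, Imp (Conj \<alpha> \<chi>) \<psi>) \<in> D}"

definition max_R_cons_for :: "'p sqt set \<Rightarrow> 'p form set \<Rightarrow> 'p form set \<Rightarrow> 'p form \<Rightarrow> bool" where
  "max_R_cons_for D \<Phi> \<Delta> \<phi> \<longleftrightarrow> (\<Delta>, \<phi>) \<notin> D \<and> R_imp \<Phi> \<Delta> \<and>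
     (\<forall>\<psi>. \<psi> \<notin> \<Delta> \<longrightarrow> \<phi> \<in> Phi_set D \<Phi> \<Delta> \<psi>)"

definition max_R_cons :: "'p sqt set \<Rightarrow> 'p form set \<Rightarrow> bool" where
  "max_R_cons D \<Delta> \<longleftrightarrow> (\<exists>\<phi> \<Phi>. ded_closed D \<Phi> \<and> max_R_cons_for D \<Phi> \<Delta> \<phi>)"

fun bigconj :: "'p form list \<Rightarrow> 'p form" where
  "bigconj [] = Bot"
| "bigconj (a # as) = foldl Conj a as"

text \<open>D satisfies (alpha, {beta_1,...,beta_n}), betas given as list of length n.\<close>
definition satisfies :: "'p sqt set \<Rightarrow> 'p form \<Rightarrow> 'p form list \<Rightarrow> bool" where
  "satisfies D \<alpha> \<beta>s \<longleftrightarrow>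
     (\<forall>\<Gamma> \<phi>. (\<forall>i<length \<beta>s. (insert (\<beta>s ! i) \<Gamma>, \<phi>) \<in> D) \<longrightarrow> (insert \<alpha> \<Gamma>, \<phi>) \<in> D) \<and>
     (\<forall>\<phi> \<psi>s. length \<psi>s = length \<beta>s \<longrightarrow>
        ({Imp (Conj (\<psi>s ! i) (\<beta>s ! i)) \<phi> | i. i < length \<beta>s},
          Imp (bigconj (\<psi>s @ [\<alpha>])) \<phi>) \<in> D)"

definition vd_prime :: "'p sqt set \<Rightarrow> 'p form set \<Rightarrow> bool" where
  "vd_prime D \<Gamma> \<longleftrightarrow> (\<forall>\<alpha> \<beta>s. 2 \<le> length \<beta>s \<longrightarrow> satisfies D \<alpha> \<beta>s \<longrightarrow> \<alpha> \<in> \<Gamma> \<longrightarrow>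
      (\<exists>i<length \<beta>s. \<beta>s ! i \<in> \<Gamma>))"

end

theory Submission
  imports Defs
begin

text \<open>
  (1) If no \<open>\<beta>\<^sub>i\<close> lies in \<open>\<Gamma>\<close>, maximality gives \<open>\<Gamma> \<union> {\<beta>\<^sub>i} \<turnstile> \<phi>\<close> for all \<open>i\<close>, so clause (i)
  yields \<open>\<Gamma> \<union> {\<alpha>} \<turnstile> \<phi>\<close>; since \<open>\<alpha> \<in> \<Gamma>\<close> this is \<open>\<Gamma> \<turnstile> \<phi>\<close>, a contradiction.
  (2) If no \<open>\<beta>\<^sub>i\<close> lies in \<open>\<Gamma>\<close>, maximality provides \<open>\<psi>\<^sub>i \<in> \<Gamma>\<close> with
  \<open>\<Phi> \<turnstile> \<psi>\<^sub>i \<and> \<beta>\<^sub>i \<rightarrow> \<phi>\<close>. As \<open>\<Phi>\<close> is deduction closed these implications lie in \<open>\<Phi>\<close>, so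
  clause (ii), weakened by (A) and (Cut), puts \<open>\<psi>\<^sub>1 \<and> \<dots> \<and> \<psi>\<^sub>n \<and> \<alpha> \<rightarrow> \<phi>\<close> into \<open>\<Phi>\<close>. Its antecedent
  lies in \<open>\<Gamma>\<close> by \<open>\<and>\<close>-closure, hence \<open>\<Phi> R\<^sub>\<rightarrow> \<Gamma>\<close> gives \<open>\<phi> \<in> \<Gamma>\<close> and (A) gives \<open>\<Gamma> \<turnstile> \<phi>\<close>.
\<close>

lemma foldl_Conj_mem:
  assumes "\<forall>\<alpha> \<beta>. \<alpha> \<in> G \<longrightarrow> \<beta> \<in> G \<longrightarrow> Conj \<alpha> \<beta> \<in> G"
  shows "a \<in> G \<Longrightarrow> set xs \<subseteq> G \<Longrightarrow> foldl Conj a xs \<in> G"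
  using assms by (induction xs arbitrary: a) auto

lemma bigconj_mem:
  assumes "\<forall>\<alpha> \<beta>. \<alpha> \<in> G \<longrightarrow> \<beta> \<in> G \<longrightarrow> Conj \<alpha> \<beta> \<in> G"
    and "xs \<noteq> []" and "set xs \<subseteq> G"
  shows "bigconj xs \<in> G"
  using assms by (cases xs) (auto intro: foldl_Conj_mem[OF assms(1)])

lemma mem_imp_derivable:
  assumes "sat_A D" and "\<phi> \<in> \<Gamma>"
  shows "(\<Gamma>, \<phi>) \<in> D"
  using assms by (metis insert_absorb sat_A_def)

lemma derivable_mono:
  assumes "sat_A D" and "sat_Cut D" and "(X, \<chi>) \<in> D" and "X \<subseteq> \<Phi>"
  shows "(\<Phi>, \<chi>) \<in> D"
proof -
  have "(insert \<chi> \<Phi>, \<chi>) \<in> D" using assms(1) sat_A_def by blast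
  then have "(\<Phi> \<union> X, \<chi>) \<in> D" using assms(2,3) sat_Cut_def by blast
  then show ?thesis using assms(4) by (simp add: sup_absorb1)
qed

lemma max_R_cons_for_witnesses:
  assumes "max_R_cons_for D \<Phi> \<Gamma> \<phi>" and "\<forall>i<length \<beta>s. \<beta>s ! i \<notin> \<Gamma>"
  obtains \<psi>s where "length \<psi>s = length \<beta>s" and "set \<psi>s \<subseteq> \<Gamma>"
    and "\<forall>i<length \<beta>s. (\<Phi>, Imp (Conj (\<psi>s ! i) (\<beta>s ! i)) \<phi>) \<in> D"
proof -
  have "\<forall>i<length \<beta>s. \<exists>\<psi>\<in>\<Gamma>. (\<Phi>, Imp (Conj \<psi> (\<beta>s ! i)) \<phi>) \<in> D"
    using assms by (simp add: max_R_cons_for_def Phi_set_def)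
  then obtain f where f: "\<forall>i<length \<beta>s. f i \<in> \<Gamma> \<and> (\<Phi>, Imp (Conj (f i) (\<beta>s ! i)) \<phi>) \<in> D"
    by metis
  show thesis
    by (rule that[of "map f [0..<length \<beta>s]"]) (use f in \<open>auto simp: in_set_conv_nth\<close>)
qed

lemma max_cons_imp_vd_prime:
  assumes "max_cons D \<Gamma>"
  shows "vd_prime D \<Gamma>"
  unfolding vd_prime_def
proof (intro allI impI)
  fix \<alpha> \<beta>s
  assume sat: "satisfies D \<alpha> \<beta>s" and "\<alpha> \<in> \<Gamma>"
  obtain \<phi> where max: "max_cons_for D \<Gamma> \<phi>"
    using assms max_cons_def by blast
  show "\<exists>i<length \<beta>s. \<beta>s ! i \<in> \<Gamma>"
  proof (rule ccontr)
    assume "\<not> ?thesis"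
    then have "\<forall>i<length \<beta>s. (insert (\<beta>s ! i) \<Gamma>, \<phi>) \<in> D"
      using max max_cons_for_def by blast
    then have "(insert \<alpha> \<Gamma>, \<phi>) \<in> D"
      using sat satisfies_def by blast
    with \<open>\<alpha> \<in> \<Gamma>\<close> max show False
      by (simp add: insert_absorb max_cons_for_def)
  qed
qed

lemma max_R_cons_imp_vd_prime:
  assumes A: "sat_A D" and Cut: "sat_Cut D" and "max_R_cons D \<Gamma>"
    and conj_closed: "\<forall>\<alpha> \<beta>. \<alpha> \<in> \<Gamma> \<longrightarrow> \<beta> \<in> \<Gamma> \<longrightarrow> Conj \<alpha> \<beta> \<in> \<Gamma>"
  shows "vd_prime D \<Gamma>"
  unfolding vd_prime_def
proof (intro allI impI)
  fix \<alpha> \<beta>s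
  assume sat: "satisfies D \<alpha> \<beta>s" and "\<alpha> \<in> \<Gamma>"
  obtain \<phi> \<Phi> where closed: "ded_closed D \<Phi>" and max: "max_R_cons_for D \<Phi> \<Gamma> \<phi>"
    using assms(3) max_R_cons_def by blast
  show "\<exists>i<length \<beta>s. \<beta>s ! i \<in> \<Gamma>"
  proof (rule ccontr)
    assume "\<not> ?thesis"
    then obtain \<psi>s where len: "length \<psi>s = length \<beta>s" and "set \<psi>s \<subseteq> \<Gamma>"
      and \<psi>s: "\<forall>i<length \<beta>s. (\<Phi>, Imp (Conj (\<psi>s ! i) (\<beta>s ! i)) \<phi>) \<in> D"
      using max_R_cons_for_witnesses[OF max] by blast
    have "{Imp (Conj (\<psi>s ! i) (\<beta>s ! i)) \<phi> | i. i < length \<beta>s} \<subseteq> \<Phi>"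
      using \<psi>s closed ded_closed_def by blast
    moreover have "({Imp (Conj (\<psi>s ! i) (\<beta>s ! i)) \<phi> | i. i < length \<beta>s},
                     Imp (bigconj (\<psi>s @ [\<alpha>])) \<phi>) \<in> D"
      using sat len satisfies_def by blast
    ultimately have "(\<Phi>, Imp (bigconj (\<psi>s @ [\<alpha>])) \<phi>) \<in> D"
      using derivable_mono[OF A Cut] by blast
    then have "Imp (bigconj (\<psi>s @ [\<alpha>])) \<phi> \<in> \<Phi>"
      using closed ded_closed_def by blast
    moreover have "bigconj (\<psi>s @ [\<alpha>]) \<in> \<Gamma>"
      using bigconj_mem[OF conj_closed] \<open>set \<psi>s \<subseteq> \<Gamma>\<close> \<open>\<alpha> \<in> \<Gamma>\<close> by simp
    ultimately have "\<phi> \<in> \<Gamma>"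
      using max unfolding max_R_cons_for_def R_imp_def by blast
    then show False
      using mem_imp_derivable[OF A] max max_R_cons_for_def by blast
  qed
qed

theorem mainTheorem11:
  fixes D :: "('p::countable) sqt set" and \<Gamma> :: "'p form set"
  shows "(max_cons D \<Gamma> \<longrightarrow> vd_prime D \<Gamma>) \<and>
         (sat_A D \<and> sat_Cut D \<and> max_R_cons D \<Gamma> \<and>
            (\<forall>\<alpha> \<beta>. \<alpha> \<in> \<Gamma> \<longrightarrow> \<beta> \<in> \<Gamma> \<longrightarrow> Conj \<alpha> \<beta> \<in> \<Gamma>)
          \<longrightarrow> vd_prime D \<Gamma>)"
  using max_cons_imp_vd_prime max_R_cons_imp_vd_prime by blast

end
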